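(* Assume hypotheses (A) and (B), suppose the routing matrix $P$ has a branching structure (for every $i$ the set $\{j:p_{ji}>0\}$ has at most one element), and let $\rho$ satisfy $(\rho P)_i<\rho_i$ for all $i$. Then for every $$0<\varepsilon<\min_{1\le i\le d}\frac{\rho_i}{G_{ii}}\Bigl(\frac{\mu_i}{\nu_i}-1\Bigr),$$ the function $h_{\varepsilon,\rho}(x)=\sum_{i=1}^d\prod_{j=1}^d(1+\varepsilon G_{ji}/\rho_i)^{x^j}$ satisfies $$\limsup_{|x|\to\infty}\frac{\mathcal{L}h_{\varepsilon,\rho}(x)}{h_{\varepsilon,\rho}(x)}=-\varepsilon\min_{1\le i\le d}\Bigl(\frac{\mu_i}{\rho_i+\varepsilon G_{ii}}-\frac{\nu_i}{\rho_i}\Bigr)<0.$$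
   Context: Jackson network with $d$ queues: arrival rates $\lambda_i\ge0$, service rates $\mu_i>0$, routing matrix $P=(p_{ij})_{i,j=1}^d$ nonnegative with $p_{ii}=0$, $\sum_jp_{ij}\le1$, $p_{i0}=1-\sum_jp_{ij}$. With $\epsilon^i$ the unit vectors, $q(\epsilon^i)=\lambda_i$, $q(-\epsilon^i)=\mu_ip_{i0}$, $q(\epsilon^j-\epsilon^i)=\mu_ip_{ij}$, $q=0$ otherwise; the process on $\mathbb{Z}_+^d$ has generator $\mathcal{L}f(y)=\sum_{z\in\mathbb{Z}_+^d}q(z-y)(f(z)-f(y))$. Hypothesis (A): $(q(x-y))_{x,y\in\mathbb{Z}^d}$ irreducible (equivalently spectral radius of $P$ $<1$ and for every $i$ some $\lambda_jp^{(n)}_{ji}>0$); the traffic equations $\nu_j=\lambda_j+\sum_i\nu_ip_{ij}$ have a unique solution with $\nu_i>0$. Hypothesis (B): $\nu_i<\mu_i$ for all $i$. $G=(I-P)^{-1}$, $(\rho P)_i=\sum_j\rho_jp_{ji}$. *)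

theory Defs
  imports "HOL-Analysis.Analysis"
begin

text \<open>Jackson network with index type 'd (finite, d = CARD('d) queues).
  States are vectors in Z_+^d, i.e. functions 'd \<Rightarrow> nat; jumps are
  vectors in Z^d, i.e. functions 'd \<Rightarrow> int.\<close>

definition unitv :: "'d \<Rightarrow> 'd \<Rightarrow> int" where
  "unitv i = (\<lambda>k. if k = i then 1 else 0)"

definition exit_prob :: "('d::finite \<Rightarrow> 'd \<Rightarrow> real) \<Rightarrow> 'd \<Rightarrow> real" where
  "exit_prob P i = 1 - (\<Sum>j\<in>UNIV. P i j)"

definition jrate ::
  "('d::finite \<Rightarrow> real) \<Rightarrow> ('d \<Rightarrow> real) \<Rightarrow> ('d \<Rightarrow> 'd \<Rightarrow> real) \<Rightarrow> ('d \<Rightarrow> int) \<Rightarrow> real" where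
  "jrate lam mu P w =
     (\<Sum>i\<in>UNIV. if w = unitv i then lam i else 0)
   + (\<Sum>i\<in>UNIV. if w = (\<lambda>k. - unitv i k) then mu i * exit_prob P i else 0)
   + (\<Sum>i\<in>UNIV. \<Sum>j\<in>UNIV. if i \<noteq> j \<and> w = (\<lambda>k. unitv j k - unitv i k) then mu i * P i j else 0)"

definition jgen ::
  "('d::finite \<Rightarrow> real) \<Rightarrow> ('d \<Rightarrow> real) \<Rightarrow> ('d \<Rightarrow> 'd \<Rightarrow> real)
   \<Rightarrow> (('d \<Rightarrow> nat) \<Rightarrow> real) \<Rightarrow> ('d \<Rightarrow> nat) \<Rightarrow> real" where
  "jgen lam mu P f y =
     (\<Sum>\<^sub>\<infinity>z. jrate lam mu P (\<lambda>k. int (z k) - int (y k)) * (f z - f y))"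

definition irreducible_rates :: "(('d \<Rightarrow> int) \<Rightarrow> real) \<Rightarrow> bool" where
  "irreducible_rates q \<longleftrightarrow> {(x, y). q (\<lambda>k. y k - x k) > 0}\<^sup>* = UNIV"

definition Gmat :: "('d::finite \<Rightarrow> 'd \<Rightarrow> real) \<Rightarrow> 'd \<Rightarrow> 'd \<Rightarrow> real" where
  "Gmat P i j = matrix_inv (mat 1 - (\<chi> a b. P a b)) $ i $ j"

definition hfun ::
  "('d::finite \<Rightarrow> 'd \<Rightarrow> real) \<Rightarrow> real \<Rightarrow> ('d \<Rightarrow> real) \<Rightarrow> ('d \<Rightarrow> nat) \<Rightarrow> real" where
  "hfun P eps rho x = (\<Sum>i\<in>UNIV. \<Prod>j\<in>UNIV. (1 + eps * Gmat P j i / rho i) ^ x j)"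

end

theory Submission
  imports Defs
begin

text \<open>Write \<open>h = \<Sum>k. h\<^sub>k\<close> with \<open>h\<^sub>k(x) = \<Prod>j. a\<^sub>j\<^sub>k ^ x\<^sub>j\<close> and
  \<open>a\<^sub>j\<^sub>k = 1 + \<epsilon> G\<^sub>j\<^sub>k / \<rho>\<^sub>k\<close>. The identities \<open>G = I + P G\<close> and \<open>\<lambda> G = \<nu>\<close> make every \<open>h\<^sub>k\<close>
  an eigenfunction of the generator off the face \<open>x\<^sub>k = 0\<close>, with eigenvalue
  \<open>\<epsilon> \<nu>\<^sub>k / \<rho>\<^sub>k - \<epsilon> \<mu>\<^sub>k / (\<rho>\<^sub>k + \<epsilon> G\<^sub>k\<^sub>k)\<close>; on the face the service term of queue
  \<open>k\<close> drops out.
  So \<open>L h / h\<close> is an average of these drifts with weights \<open>h\<^sub>k / h\<close>, up to boundary terms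
  weighted by \<open>h\<^sub>k / h\<close> on \<open>x\<^sub>k = 0\<close>. If \<open>k\<close> has parent \<open>p\<close> in the routing forest then
  \<open>a\<^sub>j\<^sub>k = 1 + t\<^sub>k (a\<^sub>j\<^sub>p - 1)\<close> with \<open>t\<^sub>k = \<rho>\<^sub>p P\<^sub>p\<^sub>k / \<rho>\<^sub>k < 1\<close>, whence \<open>h\<^sub>k\<^sup>N \<le> h\<^sub>p\<^sup>N\<^sup>-\<^sup>1\<close> on
  that face for large \<open>N\<close>. Thus the boundary weights tend to zero as \<open>|x| \<rightarrow> \<infinity>\<close>, and the limsup
  is the largest drift, attained along the axis of the queue realising it.\<close>

lemma obtain_minimizer:
  fixes f :: "'a::finite \<Rightarrow> 'b::linorder"
  obtains m where "\<And>k. f m \<le> f k"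
  using arg_min_least[where S = UNIV and f = f] by auto

lemma power_convex_comb_le:
  fixes a t :: real
  assumes a: "1 \<le> a" and t: "0 \<le> t" "t < 1" and N: "a / (1 - t) \<le> real N" "0 < N"
  shows "(1 + t * (a - 1)) ^ N \<le> a ^ (N - 1)"
proof -
  define b where "b = 1 + t * (a - 1)"
  have b: "1 \<le> b" "b \<le> a"
    using a t mult_left_le_one_le[of "a - 1" t] by (auto simp: b_def)
  have "a - 1 = a / (1 - t) * ((1 - t) * (a - 1) / a)"
    using a t by (simp add: field_simps)
  also have "\<dots> \<le> real N * ((1 - t) * (a - 1) / a)"
    using a t N by (intro mult_right_mono) auto
  finally have step: "a - 1 \<le> real N * ((1 - t) * (a - 1) / a)" .
  have "(1 - t) * (a - 1) / a = (a - b) / a"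
    by (simp add: b_def algebra_simps)
  also have "\<dots> \<le> (a - b) / b"
    using b by (intro divide_left_mono) auto
  also have "\<dots> = a / b - 1"
    using b by (simp add: field_simps)
  finally have "real N * ((1 - t) * (a - 1) / a) \<le> real N * (a / b - 1)"
    by (rule mult_left_mono) simp
  with step have "a \<le> 1 + real N * (a / b - 1)"
    by linarith
  also have "1 + real N * (a / b - 1) \<le> (a / b) ^ N"
    using Bernoulli_inequality[of "a / b - 1" N] b by simp
  finally have "a * b ^ N \<le> a ^ N"
    using b by (simp add: power_divide pos_le_divide_eq)
  also have "a ^ N = a * a ^ (N - 1)"
    using N by (simp flip: power_Suc)
  finally show ?thesis
    using a by (simp add: b_def)
qed

lemma Limsup_cofinite_eqI:
  fixes f g :: "'a \<Rightarrow> real"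
  assumes upper: "\<And>x. f x \<le> M + g x" and g: "(g \<longlongrightarrow> 0) cofinite"
    and lower: "infinite {x. M \<le> f x}"
  shows "Limsup cofinite (\<lambda>x. ereal (f x)) = ereal M"
proof (rule antisym)
  have "cofinite \<noteq> (bot :: 'a filter)"
    using lower by (auto dest: finite_subset[OF subset_UNIV])
  moreover have "((\<lambda>x. ereal (M + g x)) \<longlongrightarrow> ereal M) cofinite"
    using tendsto_add[OF tendsto_const g, of M] by (simp add: lim_ereal)
  ultimately have "Limsup cofinite (\<lambda>x. ereal (M + g x)) = ereal M"
    by (intro lim_imp_Limsup) auto
  then show "Limsup cofinite (\<lambda>x. ereal (f x)) \<le> ereal M"
    using Limsup_mono[of "\<lambda>x. ereal (f x)" "\<lambda>x. ereal (M + g x)" cofinite] upper by simp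
next
  show "ereal M \<le> Limsup cofinite (\<lambda>x. ereal (f x))"
  proof (rule Limsup_greatest)
    fix Q :: "'a \<Rightarrow> bool" assume "eventually Q cofinite"
    moreover have "\<exists>\<^sub>F x in cofinite. M \<le> f x"
      using lower by (simp add: frequently_cofinite)
    ultimately obtain x where "Q x" "M \<le> f x"
      using frequently_eventually_conj frequently_ex by blast
    then show "ereal M \<le> (SUP x\<in>Collect Q. ereal (f x))"
      by (intro SUP_upper2[of x]) auto
  qed
qed

definition arrival :: "('d \<Rightarrow> nat) \<Rightarrow> 'd \<Rightarrow> 'd \<Rightarrow> nat" where
  "arrival y i = y(i := Suc (y i))"

definition departure :: "('d \<Rightarrow> nat) \<Rightarrow> 'd \<Rightarrow> 'd \<Rightarrow> nat" where
  "departure y i = y(i := y i - 1)"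

definition transfer :: "('d \<Rightarrow> nat) \<Rightarrow> 'd \<Rightarrow> 'd \<Rightarrow> 'd \<Rightarrow> nat" where
  "transfer y i j = arrival (departure y i) j"

lemma jump_eq_unitv_iff:
  "(\<lambda>k. int (z k) - int (y k)) = unitv i \<longleftrightarrow> z = arrival y i"
  by (auto simp: fun_eq_iff arrival_def unitv_def)

lemma jump_eq_neg_unitv_iff:
  "(\<lambda>k. int (z k) - int (y k)) = (\<lambda>k. - unitv i k) \<longleftrightarrow> 0 < y i \<and> z = departure y i"
  by (auto simp: fun_eq_iff departure_def unitv_def)

lemma jump_eq_transfer_iff:
  assumes "i \<noteq> j"
  shows "(\<lambda>k. int (z k) - int (y k)) = (\<lambda>k. unitv j k - unitv i k) \<longleftrightarrow> 0 < y i \<and> z = transfer y i j"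
  using assms by (auto simp: fun_eq_iff transfer_def arrival_def departure_def unitv_def)

lemma jrate_jump:
  "jrate lam mu P (\<lambda>k. int (z k) - int (y k)) =
     (\<Sum>i\<in>UNIV. if z = arrival y i then lam i else 0)
   + (\<Sum>i\<in>UNIV. if 0 < y i \<and> z = departure y i then mu i * exit_prob P i else 0)
   + (\<Sum>i\<in>UNIV. \<Sum>j\<in>UNIV. if i \<noteq> j \<and> 0 < y i \<and> z = transfer y i j then mu i * P i j else 0)"
proof -
  have "(i \<noteq> j \<and> (\<lambda>k. int (z k) - int (y k)) = (\<lambda>k. unitv j k - unitv i k))
        \<longleftrightarrow> (i \<noteq> j \<and> 0 < y i \<and> z = transfer y i j)" for i j
    using jump_eq_transfer_iff[of i j z y] by blast
  then show ?thesis
    unfolding jrate_def jump_eq_unitv_iff jump_eq_neg_unitv_iff by presburger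
qed

definition jump_box :: "('d::finite \<Rightarrow> nat) \<Rightarrow> ('d \<Rightarrow> nat) set" where
  "jump_box y = {z. \<forall>k. z k \<le> Suc (y k)}"

lemma finite_jump_box: "finite (jump_box y)"
proof (rule finite_subset)
  show "jump_box y \<subseteq> PiE UNIV (\<lambda>k. {..Suc (y k)})"
    by (auto simp: jump_box_def PiE_UNIV_domain)
qed (simp add: finite_PiE)

lemma jumps_in_jump_box:
  "arrival y i \<in> jump_box y" "departure y i \<in> jump_box y" "transfer y i j \<in> jump_box y"
  by (auto simp: jump_box_def arrival_def departure_def transfer_def)

lemma jgen_eq_sum_jump_box:
  "jgen lam mu P f y = (\<Sum>z\<in>jump_box y. jrate lam mu P (\<lambda>k. int (z k) - int (y k)) * (f z - f y))"
proof -
  have "jrate lam mu P (\<lambda>k. int (z k) - int (y k)) = 0" if "z \<notin> jump_box y" for z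
  proof -
    have "z \<noteq> arrival y i" "z \<noteq> departure y i" "z \<noteq> transfer y i j" for i j
      using that jumps_in_jump_box by metis+
    then show ?thesis unfolding jrate_jump by simp
  qed
  then have "jgen lam mu P f y
      = (\<Sum>\<^sub>\<infinity>z\<in>jump_box y. jrate lam mu P (\<lambda>k. int (z k) - int (y k)) * (f z - f y))"
    unfolding jgen_def by (intro infsum_cong_neutral) auto
  then show ?thesis by (simp add: finite_jump_box)
qed

lemma jgen_sum:
  "jgen lam mu P (\<lambda>z. \<Sum>k\<in>K. g k z) y = (\<Sum>k\<in>K. jgen lam mu P (g k) y)"
  unfolding jgen_eq_sum_jump_box
  by (subst sum.swap) (simp add: sum_subtractf[symmetric] sum_distrib_left)

lemma sum_point_masses:
  fixes c :: "'i \<Rightarrow> real" and g :: "'z \<Rightarrow> real"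
  assumes "finite N" "\<And>i. t i \<in> N"
  shows "(\<Sum>z\<in>N. (\<Sum>i\<in>I. if Q i \<and> z = t i then c i else 0) * g z)
       = (\<Sum>i\<in>I. if Q i then c i * g (t i) else 0)"
  unfolding sum_distrib_right
proof (subst sum.swap, rule sum.cong)
  show "(\<Sum>z\<in>N. (if Q i \<and> z = t i then c i else 0) * g z) = (if Q i then c i * g (t i) else 0)" for i
    using assms by (cases "Q i") (simp_all add: if_distrib[where f = "\<lambda>a. a * _"] cong: if_cong)
qed simp

lemma jgen_explicit:
  "jgen lam mu P f y =
     (\<Sum>i\<in>UNIV. lam i * (f (arrival y i) - f y))
   + (\<Sum>i\<in>UNIV. if 0 < y i then mu i * exit_prob P i * (f (departure y i) - f y) else 0)
   + (\<Sum>i\<in>UNIV. \<Sum>j\<in>UNIV. if i \<noteq> j \<and> 0 < y i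
        then mu i * P i j * (f (transfer y i j) - f y) else 0)"
proof -
  define g where "g z = f z - f y" for z
  note point_masses = sum_point_masses[OF finite_jump_box[of y], where g = g]
  have arrivals: "(\<Sum>z\<in>jump_box y. (\<Sum>i\<in>UNIV. if z = arrival y i then lam i else 0) * g z)
      = (\<Sum>i\<in>UNIV. lam i * g (arrival y i))"
    by (rule point_masses[where Q = "\<lambda>_. True", simplified], rule jumps_in_jump_box)
  have departures: "(\<Sum>z\<in>jump_box y.
        (\<Sum>i\<in>UNIV. if 0 < y i \<and> z = departure y i then mu i * exit_prob P i else 0) * g z)
      = (\<Sum>i\<in>UNIV. if 0 < y i then mu i * exit_prob P i * g (departure y i) else 0)"
    by (rule point_masses, rule jumps_in_jump_box)
  have transfers: "(\<Sum>z\<in>jump_box y. (\<Sum>i\<in>UNIV. \<Sum>j\<in>UNIV.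
          if i \<noteq> j \<and> 0 < y i \<and> z = transfer y i j then mu i * P i j else 0) * g z)
      = (\<Sum>i\<in>UNIV. \<Sum>j\<in>UNIV. if i \<noteq> j \<and> 0 < y i then mu i * P i j * g (transfer y i j) else 0)"
    (is "(\<Sum>z\<in>_. (\<Sum>i\<in>UNIV. ?T i z) * g z) = _")
  proof -
    have "(\<Sum>z\<in>jump_box y. (\<Sum>i\<in>UNIV. ?T i z) * g z) = (\<Sum>i\<in>UNIV. \<Sum>z\<in>jump_box y. ?T i z * g z)"
      by (simp only: sum_distrib_right[where r = "g _"]) (rule sum.swap)
    then show ?thesis
      unfolding conj_assoc[symmetric] by (simp only: point_masses jumps_in_jump_box)
  qed
  show ?thesis
    unfolding jgen_eq_sum_jump_box jrate_jump distrib_right sum.distrib g_def[symmetric]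
    unfolding arrivals departures transfers ..
qed

definition prod_pow :: "('d::finite \<Rightarrow> real) \<Rightarrow> ('d \<Rightarrow> nat) \<Rightarrow> real" where
  "prod_pow b x = (\<Prod>j\<in>UNIV. b j ^ x j)"

lemma prod_pow_upd: "prod_pow b (y(i := n)) = b i ^ n * (\<Prod>j\<in>UNIV - {i}. b j ^ y j)"
  unfolding prod_pow_def by (simp add: prod.remove[of UNIV i])

lemma prod_pow_arrival: "prod_pow b (arrival y i) = b i * prod_pow b y"
  using prod_pow_upd[of b y i "y i"] by (simp add: arrival_def prod_pow_upd)

lemma prod_pow_departure:
  assumes "0 < y i"
  shows "b i * prod_pow b (departure y i) = prod_pow b y"
proof -
  have "b i * b i ^ (y i - 1) = b i ^ y i"
    using assms by (simp flip: power_Suc)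
  then show ?thesis
    using prod_pow_upd[of b y i "y i"] by (simp add: departure_def prod_pow_upd)
qed

lemma prod_pow_transfer:
  assumes "0 < y i"
  shows "b i * prod_pow b (transfer y i j) = b j * prod_pow b y"
  using prod_pow_departure[of y i b] assms
  unfolding transfer_def prod_pow_arrival by (simp add: mult.left_commute)

lemma prod_pow_power: "prod_pow b x ^ N = prod_pow (\<lambda>j. b j ^ N) x"
  unfolding prod_pow_def prod_power_distrib by (simp add: power_mult[symmetric] mult.commute)

lemma jgen_prod_pow:
  assumes b: "\<And>j. b j \<noteq> 0"
  shows "jgen lam mu P (prod_pow b) y = prod_pow b y *
           ((\<Sum>i\<in>UNIV. lam i * (b i - 1))
          + (\<Sum>i | 0 < y i. mu i * ((exit_prob P i + (\<Sum>j\<in>UNIV. P i j * b j)) / b i - 1)))"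
proof -
  define h where "h = prod_pow b y"
  have arrivals: "(\<Sum>i\<in>UNIV. lam i * (prod_pow b (arrival y i) - h)) = h * (\<Sum>i\<in>UNIV. lam i * (b i - 1))"
    by (simp add: prod_pow_arrival h_def sum_distrib_left algebra_simps)
  have services: "(if 0 < y i then mu i * exit_prob P i * (prod_pow b (departure y i) - h) else 0)
      + (\<Sum>j\<in>UNIV. if i \<noteq> j \<and> 0 < y i then mu i * P i j * (prod_pow b (transfer y i j) - h) else 0)
      = (if 0 < y i then h * (mu i * ((exit_prob P i + (\<Sum>j\<in>UNIV. P i j * b j)) / b i - 1)) else 0)"
    for i
  proof (cases "0 < y i")
    case True
    have departure: "prod_pow b (departure y i) = h / b i"
      using prod_pow_departure[of y i b] True b[of i] by (simp add: h_def field_simps)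
    have transfer: "prod_pow b (transfer y i j) = b j * h / b i" for j
      using prod_pow_transfer[of y i b j] True b[of i] by (simp add: h_def field_simps)
    \<comment> \<open>the guard \<open>i \<noteq> j\<close> can be dropped: the term \<open>j = i\<close> vanishes\<close>
    have "(\<Sum>j\<in>UNIV. if i \<noteq> j then mu i * P i j * (prod_pow b (transfer y i j) - h) else 0)
        = (\<Sum>j\<in>UNIV. mu i * P i j * (b j * h / b i - h))"
      by (rule sum.cong) (use b[of i] in \<open>auto simp: transfer\<close>)
    also have "\<dots> = mu i * (h / b i * (\<Sum>j\<in>UNIV. P i j * b j) - h * (\<Sum>j\<in>UNIV. P i j))"
      by (simp add: sum_distrib_left sum_subtractf algebra_simps)
    finally have "(\<Sum>j\<in>UNIV. if i \<noteq> j then mu i * P i j * (prod_pow b (transfer y i j) - h) else 0)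
        = mu i * (h / b i * (\<Sum>j\<in>UNIV. P i j * b j) - h * (\<Sum>j\<in>UNIV. P i j))" .
    with True b[of i] show ?thesis
      by (simp add: departure exit_prob_def field_simps)
  qed simp
  have "jgen lam mu P (prod_pow b) y = h * (\<Sum>i\<in>UNIV. lam i * (b i - 1))
      + (\<Sum>i\<in>UNIV. if 0 < y i then h * (mu i * ((exit_prob P i + (\<Sum>j\<in>UNIV. P i j * b j)) / b i - 1)) else 0)"
    unfolding jgen_explicit h_def[symmetric] arrivals add.assoc sum.distrib[symmetric] services ..
  also have "\<dots> = h * ((\<Sum>i\<in>UNIV. lam i * (b i - 1))
      + (\<Sum>i | 0 < y i. mu i * ((exit_prob P i + (\<Sum>j\<in>UNIV. P i j * b j)) / b i - 1)))"
    by (simp add: sum.inter_filter[symmetric] sum_distrib_left distrib_left)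
  finally show ?thesis
    unfolding h_def .
qed

lemma column_sum_le_one:
  fixes P :: "'d::finite \<Rightarrow> 'd \<Rightarrow> real"
  assumes P_nonneg: "\<And>i j. 0 \<le> P i j"
    and P_substoch: "\<And>i. (\<Sum>j\<in>UNIV. P i j) \<le> 1"
    and branching: "card {j. 0 < P j i} \<le> 1"
  shows "(\<Sum>j\<in>UNIV. P j i) \<le> 1"
proof -
  have P_le_one: "P j i \<le> 1" for j
    using member_le_sum[where f = "P j" and i = i and A = UNIV] P_nonneg P_substoch[of j] by simp
  have "(\<Sum>j\<in>UNIV. P j i) = (\<Sum>j | 0 < P j i. P j i)"
    using P_nonneg by (intro sum.mono_neutral_right) (auto simp: order.order_iff_strict)
  also have "\<dots> \<le> real (card {j. 0 < P j i}) * 1"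
    by (rule sum_bounded_above) (rule P_le_one)
  also have "\<dots> \<le> 1"
    using branching by simp
  finally show ?thesis .
qed

lemma excessive_pos:
  fixes P :: "'d::finite \<Rightarrow> 'd \<Rightarrow> real"
  assumes P_nonneg: "\<And>i j. 0 \<le> P i j"
    and column_sums: "\<And>i. (\<Sum>j\<in>UNIV. P j i) \<le> 1"
    and excessive: "\<And>i. (\<Sum>j\<in>UNIV. rho j * P j i) < rho i"
  shows "0 < rho i"
proof -
  obtain m where m: "\<And>k. rho m \<le> rho k"
    using obtain_minimizer[of rho] by blast
  have "0 < rho m"
  proof (rule ccontr)
    assume "\<not> 0 < rho m"
    then have "rho m \<le> rho m * (\<Sum>j\<in>UNIV. P j m)"
      using mult_left_mono_neg[OF column_sums[of m]] by simp
    also have "\<dots> \<le> (\<Sum>j\<in>UNIV. rho j * P j m)"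
      unfolding sum_distrib_left by (intro sum_mono mult_right_mono m P_nonneg)
    finally show False
      using excessive[of m] by simp
  qed
  then show ?thesis
    using m[of i] by simp
qed

locale strictly_excessive =
  fixes P :: "'d::finite \<Rightarrow> 'd \<Rightarrow> real" and rho :: "'d \<Rightarrow> real"
  assumes P_nonneg: "\<And>i j. 0 \<le> P i j"
    and rho_pos: "\<And>i. 0 < rho i"
    and rho_excessive: "\<And>i. (\<Sum>j\<in>UNIV. rho j * P j i) < rho i"
begin

text \<open>Compare \<open>v\<close> with the largest multiple \<open>t \<cdot> \<rho>\<close> below it: if \<open>t < 0\<close>, the coordinate
  where they touch violates the strict excessivity of \<open>\<rho>\<close>.\<close>
lemma excessive_nonneg:
  assumes v: "\<And>i. (\<Sum>j\<in>UNIV. v j * P j i) \<le> v i"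
  shows "0 \<le> v i"
proof -
  obtain m where m: "\<And>k. v m / rho m \<le> v k / rho k"
    using obtain_minimizer[of "\<lambda>k. v k / rho k"] by blast
  define t where "t = v m / rho m"
  have below: "t * rho k \<le> v k" for k
    using m[of k] rho_pos[of k] by (simp add: t_def pos_le_divide_eq)
  have touch: "v m = t * rho m"
    using rho_pos[of m] by (simp add: t_def)
  have "0 \<le> t"
  proof (rule ccontr)
    assume "\<not> 0 \<le> t"
    then have "t * rho m < t * (\<Sum>j\<in>UNIV. rho j * P j m)"
      using rho_excessive[of m] by (simp add: mult_less_cancel_left_neg)
    also have "\<dots> = (\<Sum>j\<in>UNIV. t * rho j * P j m)"
      by (simp add: sum_distrib_left mult.assoc)
    also have "\<dots> \<le> (\<Sum>j\<in>UNIV. v j * P j m)"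
      by (intro sum_mono mult_right_mono below P_nonneg)
    finally show False
      using v[of m] touch by simp
  qed
  then show ?thesis
    using below[of i] rho_pos[of i] by (meson mult_nonneg_nonneg less_imp_le order_trans)
qed

abbreviation I_minus_P :: "real^'d^'d" where
  "I_minus_P \<equiv> mat 1 - (\<chi> a b. P a b)"

lemma I_minus_P_invertible: "invertible I_minus_P"
proof -
  have "x = 0" if "transpose I_minus_P *v x = 0" for x :: "real^'d"
  proof -
    have "(x v* I_minus_P) $ i = (\<Sum>j\<in>UNIV. x $ j * ((if j = i then 1 else 0) - P j i))" for i
      by (simp add: vector_matrix_mult_def mat_def)
    also have "\<dots> i = x $ i - (\<Sum>j\<in>UNIV. x $ j * P j i)" for i
      by (simp add: right_diff_distrib sum_subtractf if_distrib[where f = "times _"] cong: if_cong)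
    finally have entry: "(x v* I_minus_P) $ i = x $ i - (\<Sum>j\<in>UNIV. x $ j * P j i)" for i .
    have "(x v* I_minus_P) $ i = 0" for i
      using that by simp
    then have fixed: "(\<Sum>j\<in>UNIV. x $ j * P j i) = x $ i" for i
      using entry[of i] by (metis eq_iff_diff_eq_0)
    have "0 \<le> x $ i" for i
      by (rule excessive_nonneg) (simp add: fixed)
    moreover have "0 \<le> - x $ i" for i
      by (rule excessive_nonneg) (simp add: fixed sum_negf)
    ultimately show "x = 0"
      by (simp add: vec_eq_iff order_antisym)
  qed
  then have "\<exists>B. B ** transpose I_minus_P = mat 1"
    by (simp add: matrix_left_invertible_ker)
  then show ?thesis
    by (simp add: left_invertible_transpose invertible_right_inverse)
qed

lemma I_minus_P_inverse:
  "I_minus_P ** matrix_inv I_minus_P = mat 1" "matrix_inv I_minus_P ** I_minus_P = mat 1"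
proof -
  have "\<exists>B. I_minus_P ** B = mat 1 \<and> B ** I_minus_P = mat 1"
    using I_minus_P_invertible by (simp add: invertible_def)
  then have "I_minus_P ** matrix_inv I_minus_P = mat 1 \<and> matrix_inv I_minus_P ** I_minus_P = mat 1"
    unfolding matrix_inv_def by (rule someI_ex)
  then show "I_minus_P ** matrix_inv I_minus_P = mat 1" "matrix_inv I_minus_P ** I_minus_P = mat 1"
    by auto
qed

lemma P_Gmat_eq: "(\<Sum>k\<in>UNIV. P j k * Gmat P k i) = Gmat P j i - (if j = i then 1 else 0)"
proof -
  have "(if j = i then 1 else 0) = (I_minus_P ** matrix_inv I_minus_P) $ j $ i"
    unfolding I_minus_P_inverse by (simp add: mat_def)
  also have "\<dots> = (\<Sum>k\<in>UNIV. ((if j = k then 1 else 0) - P j k) * Gmat P k i)"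
    by (simp add: matrix_matrix_mult_def mat_def Gmat_def)
  also have "\<dots> = Gmat P j i - (\<Sum>k\<in>UNIV. P j k * Gmat P k i)"
    by (simp add: left_diff_distrib sum_subtractf if_distrib[where f = "\<lambda>a. a * _"] cong: if_cong)
  finally show ?thesis
    by simp
qed

lemma Gmat_P_eq: "(\<Sum>l\<in>UNIV. Gmat P j l * P l k) = Gmat P j k - (if j = k then 1 else 0)"
proof -
  have "(if j = k then 1 else 0) = (matrix_inv I_minus_P ** I_minus_P) $ j $ k"
    unfolding I_minus_P_inverse by (simp add: mat_def)
  also have "\<dots> = (\<Sum>l\<in>UNIV. Gmat P j l * ((if l = k then 1 else 0) - P l k))"
    by (simp add: matrix_matrix_mult_def mat_def Gmat_def)
  also have "\<dots> = Gmat P j k - (\<Sum>l\<in>UNIV. Gmat P j l * P l k)"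
    by (simp add: right_diff_distrib sum_subtractf if_distrib[where f = "times _"] cong: if_cong)
  finally show ?thesis
    by simp
qed

lemma Gmat_nonneg: "0 \<le> Gmat P j k"
  by (rule excessive_nonneg[where v = "Gmat P j"]) (simp add: Gmat_P_eq)

lemma Gmat_diag_ge_one: "1 \<le> Gmat P k k"
  using Gmat_P_eq[of k k] sum_nonneg[of UNIV "\<lambda>l. Gmat P k l * P l k"]
  by (simp add: Gmat_nonneg P_nonneg)

end

locale jackson_branching = strictly_excessive P rho
  for P :: "'d::finite \<Rightarrow> 'd \<Rightarrow> real" and rho :: "'d \<Rightarrow> real" +
  fixes lam mu nu :: "'d \<Rightarrow> real" and eps :: real
  assumes mu_pos: "\<And>i. 0 < mu i"
    and traffic: "\<And>j. nu j = lam j + (\<Sum>i\<in>UNIV. nu i * P i j)"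
    and nu_pos: "\<And>i. 0 < nu i"
    and branching: "\<And>i. card {j. 0 < P j i} \<le> 1"
    and eps_pos: "0 < eps"
begin

abbreviation G :: "'d \<Rightarrow> 'd \<Rightarrow> real" where
  "G \<equiv> Gmat P"

lemma lam_Gmat_eq_nu: "(\<Sum>j\<in>UNIV. lam j * G j i) = nu i"
proof -
  have "(\<Sum>j\<in>UNIV. lam j * G j i) = (\<Sum>j\<in>UNIV. nu j * G j i - (\<Sum>l\<in>UNIV. nu l * P l j * G j i))"
  proof (rule sum.cong)
    show "lam j * G j i = nu j * G j i - (\<Sum>l\<in>UNIV. nu l * P l j * G j i)" for j
      using traffic[of j] by (simp add: sum_distrib_left sum_distrib_right algebra_simps)
  qed simp
  also have "\<dots> = (\<Sum>j\<in>UNIV. nu j * G j i) - (\<Sum>l\<in>UNIV. nu l * (\<Sum>j\<in>UNIV. P l j * G j i))"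
    by (simp add: sum_subtractf sum_distrib_left mult.assoc) (rule sum.swap)
  also have "\<dots> = nu i"
    by (simp add: P_Gmat_eq right_diff_distrib sum_subtractf if_distrib[where f = "times _"]
        cong: if_cong)
  finally show ?thesis .
qed

definition hbase :: "'d \<Rightarrow> 'd \<Rightarrow> real" where
  "hbase j k = 1 + eps * G j k / rho k"

definition hterm :: "'d \<Rightarrow> ('d \<Rightarrow> nat) \<Rightarrow> real" where
  "hterm k = prod_pow (\<lambda>j. hbase j k)"

lemma hfun_eq_sum_hterm: "hfun P eps rho x = (\<Sum>k\<in>UNIV. hterm k x)"
  by (simp add: hfun_def hterm_def prod_pow_def hbase_def)

lemma hbase_ge_one: "1 \<le> hbase j k"
  using eps_pos Gmat_nonneg[of j k] rho_pos[of k] by (simp add: hbase_def)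

lemma hbase_diag_gt_one: "1 < hbase k k"
  using eps_pos Gmat_diag_ge_one[of k] rho_pos[of k] by (simp add: hbase_def)

lemma rho_plus_eps_Gmat_pos: "0 < rho k + eps * G k k"
  using rho_pos[of k] eps_pos Gmat_nonneg[of k k] by (simp add: add_pos_nonneg)

definition boundary_rate :: "'d \<Rightarrow> real" where
  "boundary_rate k = eps * mu k / (rho k + eps * G k k)"

definition drift :: "'d \<Rightarrow> real" where
  "drift k = eps * nu k / rho k - boundary_rate k"

definition local_drift :: "'d \<Rightarrow> ('d \<Rightarrow> nat) \<Rightarrow> real" where
  "local_drift k x = drift k + (if x k = 0 then boundary_rate k else 0)"

lemma jgen_hterm: "jgen lam mu P (hterm k) x = hterm k x * local_drift k x"
proof -
  have rho_k: "0 < rho k"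
    by (rule rho_pos)
  have b_pos: "0 < hbase j k" for j
    using hbase_ge_one[of j k] by simp
  have "(\<Sum>i\<in>UNIV. lam i * (hbase i k - 1)) = eps / rho k * (\<Sum>i\<in>UNIV. lam i * G i k)"
    by (simp add: hbase_def sum_distrib_left algebra_simps)
  then have arrivals: "(\<Sum>i\<in>UNIV. lam i * (hbase i k - 1)) = eps * nu k / rho k"
    by (simp add: lam_Gmat_eq_nu)
  have "exit_prob P i + (\<Sum>j\<in>UNIV. P i j * hbase j k) = 1 + eps / rho k * (\<Sum>j\<in>UNIV. P i j * G j k)"
    for i by (simp add: exit_prob_def hbase_def distrib_left sum.distrib sum_distrib_left mult.left_commute)
  also have "\<dots> i = hbase i k - (if i = k then eps / rho k else 0)" for i
    by (simp add: P_Gmat_eq hbase_def right_diff_distrib)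
  finally have feedback: "exit_prob P i + (\<Sum>j\<in>UNIV. P i j * hbase j k)
      = hbase i k - (if i = k then eps / rho k else 0)" for i .
  have services: "mu i * ((exit_prob P i + (\<Sum>j\<in>UNIV. P i j * hbase j k)) / hbase i k - 1)
      = (if i = k then - boundary_rate k else 0)" for i
  proof (cases "i = k")
    case True
    have "rho k * hbase k k = rho k + eps * G k k"
      using rho_k by (simp add: hbase_def field_simps)
    with True show ?thesis
      using b_pos[of k] rho_k rho_plus_eps_Gmat_pos[of k]
      by (simp add: feedback boundary_rate_def field_simps)
  next
    case False
    with b_pos[of i] show ?thesis
      by (simp add: feedback)
  qed
  show ?thesis
    unfolding hterm_def jgen_prod_pow[OF b_pos[THEN less_imp_neq, THEN not_sym]] arrivals services
    by (simp add: local_drift_def drift_def sum.If_cases)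
qed

lemma obtain_sole_parent:
  obtains p where "\<And>l. l \<noteq> p \<Longrightarrow> P l k = 0"
proof (cases "{j. 0 < P j k} = {}")
  case True
  then show thesis
    using that[of k] P_nonneg by (force simp: order.order_iff_strict)
next
  case False
  then have "card {j. 0 < P j k} \<noteq> 0"
    by simp
  then have "card {j. 0 < P j k} = 1"
    using branching[of k] by linarith
  then obtain p where "{j. 0 < P j k} = {p}"
    by (rule card_1_singletonE)
  then show thesis
    using that[of p] P_nonneg by (force simp: order.order_iff_strict)
qed

definition feed_ratio :: "'d \<Rightarrow> real" where
  "feed_ratio k = (\<Sum>j\<in>UNIV. rho j * P j k) / rho k"

lemma feed_ratio_nonneg: "0 \<le> feed_ratio k"
  unfolding feed_ratio_def using rho_pos P_nonneg
  by (intro divide_nonneg_pos sum_nonneg mult_nonneg_nonneg) (auto simp: less_imp_le)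

lemma feed_ratio_less_one: "feed_ratio k < 1"
  unfolding feed_ratio_def using rho_excessive[of k] rho_pos[of k] by simp

lemma hbase_sole_parent:
  assumes parent: "\<And>l. l \<noteq> p \<Longrightarrow> P l k = 0" and "j \<noteq> k"
  shows "hbase j k = 1 + feed_ratio k * (hbase j p - 1)"
proof -
  have "(\<Sum>l\<in>UNIV. G j l * P l k) = G j p * P p k" "(\<Sum>l\<in>UNIV. rho l * P l k) = rho p * P p k"
    using parent by (auto intro!: sum.neutral simp: sum.remove[of UNIV p])
  then have "G j k = G j p * P p k" "feed_ratio k = rho p * P p k / rho k"
    using Gmat_P_eq[of j k] \<open>j \<noteq> k\<close> by (simp_all add: feed_ratio_def)
  then show ?thesis
    using rho_pos[of p] rho_pos[of k] by (simp add: hbase_def field_simps)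
qed

lemma hterm_pow_le_parent:
  assumes parent: "\<And>l. l \<noteq> p \<Longrightarrow> P l k = 0"
    and N: "0 < N" "\<And>j. hbase j p / (1 - feed_ratio k) \<le> real N"
    and x: "x k = 0"
  shows "hterm k x ^ N \<le> hterm p x ^ (N - 1)"
  unfolding hterm_def prod_pow_power unfolding prod_pow_def
proof (rule prod_mono)
  fix j
  have "hbase j k ^ N \<le> hbase j p ^ (N - 1)" if "j \<noteq> k"
    using power_convex_comb_le[OF hbase_ge_one[of j p] feed_ratio_nonneg[of k] feed_ratio_less_one[of k]
        N(2)[of j] N(1)] hbase_sole_parent[OF parent that] by simp
  then show "0 \<le> (hbase j k ^ N) ^ x j \<and> (hbase j k ^ N) ^ x j \<le> (hbase j p ^ (N - 1)) ^ x j"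
    using hbase_ge_one[of j k] x by (cases "j = k") (auto intro: power_mono)
qed

lemma hterm_ge_one: "1 \<le> hterm k x"
  unfolding hterm_def prod_pow_def by (intro prod_ge_1 one_le_power hbase_ge_one)

lemma hterm_le_hfun: "hterm k x \<le> hfun P eps rho x"
  unfolding hfun_eq_sum_hterm
  by (rule member_le_sum) (auto intro: order_trans[OF zero_le_one hterm_ge_one])

lemma hfun_ge_one: "1 \<le> hfun P eps rho x"
  using hterm_ge_one hterm_le_hfun by (rule order_trans)

lemma obtain_dominance_exponent:
  obtains N where "0 < N" "\<And>x k. x k = 0 \<Longrightarrow> hterm k x ^ N \<le> hfun P eps rho x ^ (N - 1)"
proof -
  define B where "B = Max (range (\<lambda>(j, p, k). hbase j p / (1 - feed_ratio k)))"
  obtain n where n: "B \<le> real n"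
    using real_arch_simple by blast
  have N: "hbase j p / (1 - feed_ratio k) \<le> real (Suc n)" for j p k
  proof -
    have "hbase j p / (1 - feed_ratio k) \<le> B"
      unfolding B_def by (rule Max_ge) (auto intro: rev_image_eqI[of "(j, p, k)"])
    with n show ?thesis
      by simp
  qed
  have "hterm k x ^ Suc n \<le> hfun P eps rho x ^ (Suc n - 1)" if "x k = 0" for x k
  proof -
    obtain p where parent: "\<And>l. l \<noteq> p \<Longrightarrow> P l k = 0"
      using obtain_sole_parent[of k] by blast
    have "hterm k x ^ Suc n \<le> hterm p x ^ (Suc n - 1)"
      using parent N that by (intro hterm_pow_le_parent[of p k "Suc n" x]) auto
    also have "\<dots> \<le> hfun P eps rho x ^ (Suc n - 1)"
      using hterm_ge_one[of p x] by (intro power_mono hterm_le_hfun) auto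
    finally show ?thesis .
  qed
  then show thesis
    using that[of "Suc n"] by blast
qed

lemma hterm_ge_diag_power: "hbase k k ^ x k \<le> hterm k x"
proof -
  have "hbase k k ^ x k * 1 \<le> hbase k k ^ x k * (\<Prod>j\<in>UNIV - {k}. hbase j k ^ x j)"
    using hbase_ge_one[of k k] by (intro mult_left_mono prod_ge_1 one_le_power hbase_ge_one) auto
  then show ?thesis
    by (simp add: hterm_def prod_pow_def prod.remove[of UNIV k])
qed

lemma hfun_tendsto_at_top: "filterlim (hfun P eps rho) at_top cofinite"
  unfolding filterlim_at_top eventually_cofinite
proof
  fix Z :: real
  obtain n where n: "\<And>m. Z < hbase m m ^ n m"
    using real_arch_pow[OF hbase_diag_gt_one] by metis
  define B where "B = Max (range n)"
  have "{x. \<not> Z \<le> hfun P eps rho x} \<subseteq> jump_box (\<lambda>_. B)"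
  proof (clarsimp simp: jump_box_def not_le)
    fix x m assume small: "hfun P eps rho x < Z"
    show "x m \<le> Suc B"
    proof (rule ccontr)
      assume "\<not> x m \<le> Suc B"
      moreover have "n m \<le> B"
        unfolding B_def by (rule Max_ge) auto
      ultimately have "hbase m m ^ n m \<le> hbase m m ^ x m"
        using hbase_diag_gt_one[of m] by (intro power_increasing) auto
      then show False
        using n[of m] hterm_ge_diag_power[of m x] hterm_le_hfun[of m x] small by linarith
    qed
  qed
  then show "finite {x. \<not> Z \<le> hfun P eps rho x}"
    using finite_jump_box by (rule finite_subset)
qed

definition boundary_weight :: "'d \<Rightarrow> ('d \<Rightarrow> nat) \<Rightarrow> real" where
  "boundary_weight k x = (if x k = 0 then hterm k x / hfun P eps rho x else 0)"

text \<open>On \<open>x\<^sub>k = 0\<close> the weight \<open>h\<^sub>k / h\<close> is at most an \<open>N\<close>-th root of \<open>1 / h\<close>; this is where the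
  branching structure enters.\<close>
lemma boundary_weight_tendsto_zero: "(boundary_weight k \<longlongrightarrow> 0) cofinite"
proof -
  obtain N where N: "0 < N" "\<And>x k. x k = 0 \<Longrightarrow> hterm k x ^ N \<le> hfun P eps rho x ^ (N - 1)"
    using obtain_dominance_exponent by blast
  have nonneg: "0 \<le> boundary_weight k x" for x
    using hterm_ge_one[of k x] hfun_ge_one[of x] by (simp add: boundary_weight_def)
  have bound: "boundary_weight k x ^ N \<le> inverse (hfun P eps rho x)" for x
  proof (cases "x k = 0")
    case True
    have "hfun P eps rho x ^ N = hfun P eps rho x * hfun P eps rho x ^ (N - 1)"
      using N(1) by (simp flip: power_Suc)
    then show ?thesis
      using True N(2)[of x k] hfun_ge_one[of x]
      by (simp add: boundary_weight_def power_divide divide_le_eq field_simps)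
  next
    case False
    then show ?thesis
      using N(1) hfun_ge_one[of x] by (simp add: boundary_weight_def power_0_left)
  qed
  have "((\<lambda>x. boundary_weight k x ^ N) \<longlongrightarrow> 0) cofinite"
    by (rule tendsto_sandwich[OF _ _ tendsto_const tendsto_inverse_0_at_top[OF hfun_tendsto_at_top]])
      (simp_all add: always_eventually nonneg bound)
  then have "((\<lambda>x. root N (boundary_weight k x ^ N)) \<longlongrightarrow> root N 0) cofinite"
    by (rule tendsto_real_root)
  then show ?thesis
    using N(1) nonneg by (simp add: real_root_power_cancel)
qed

lemma jgen_hfun: "jgen lam mu P (hfun P eps rho) x = (\<Sum>k\<in>UNIV. hterm k x * local_drift k x)"
proof -
  have "hfun P eps rho = (\<lambda>z. \<Sum>k\<in>UNIV. hterm k z)"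
    by (simp add: fun_eq_iff hfun_eq_sum_hterm)
  then show ?thesis
    by (simp add: jgen_sum jgen_hterm)
qed

lemma generator_ratio_le:
  assumes "\<And>k. drift k \<le> c"
  shows "jgen lam mu P (hfun P eps rho) x / hfun P eps rho x
           \<le> c + (\<Sum>k\<in>UNIV. boundary_rate k * boundary_weight k x)"
proof -
  define H where "H = hfun P eps rho x"
  have H: "1 \<le> H"
    unfolding H_def by (rule hfun_ge_one)
  have "jgen lam mu P (hfun P eps rho) x
      \<le> (\<Sum>k\<in>UNIV. hterm k x * c + boundary_rate k * (H * boundary_weight k x))"
    unfolding jgen_hfun local_drift_def
  proof (rule sum_mono)
    fix k
    have "hterm k x * drift k \<le> hterm k x * c"
      using assms[of k] hterm_ge_one[of k x] by (intro mult_left_mono) auto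
    then show "hterm k x * (drift k + (if x k = 0 then boundary_rate k else 0))
        \<le> hterm k x * c + boundary_rate k * (H * boundary_weight k x)"
      using H by (simp add: boundary_weight_def H_def algebra_simps)
  qed
  also have "\<dots> = H * (c + (\<Sum>k\<in>UNIV. boundary_rate k * boundary_weight k x))"
    by (simp add: H_def hfun_eq_sum_hterm sum.distrib sum_distrib_left sum_distrib_right algebra_simps)
  finally show ?thesis
    using H by (simp add: H_def pos_divide_le_eq mult.commute)
qed

lemma generator_ratio_ge:
  assumes "\<And>k. c \<le> local_drift k x"
  shows "c \<le> jgen lam mu P (hfun P eps rho) x / hfun P eps rho x"
proof -
  have "hfun P eps rho x * c = (\<Sum>k\<in>UNIV. hterm k x * c)"
    by (simp add: hfun_eq_sum_hterm sum_distrib_right)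
  also have "\<dots> \<le> jgen lam mu P (hfun P eps rho) x"
    unfolding jgen_hfun using assms hterm_ge_one
    by (intro sum_mono mult_left_mono) (auto intro: order_trans[OF zero_le_one])
  finally show ?thesis
    using hfun_ge_one[of x] by (simp add: pos_le_divide_eq mult.commute)
qed

definition top_drift :: real where
  "top_drift = - eps * Min (range (\<lambda>i. mu i / (rho i + eps * G i i) - nu i / rho i))"

lemma drift_eq: "drift k = - eps * (mu k / (rho k + eps * G k k) - nu k / rho k)"
  by (simp add: drift_def boundary_rate_def algebra_simps)

lemma drift_le_top_drift: "drift k \<le> top_drift"
  unfolding top_drift_def drift_eq using eps_pos by (intro mult_left_mono_neg) auto

lemma obtain_top_drift:
  obtains i where "drift i = top_drift"
proof -
  obtain i where "\<And>k. mu i / (rho i + eps * G i i) - nu i / rho i \<le> mu k / (rho k + eps * G k k) - nu k / rho k"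
    using obtain_minimizer[of "\<lambda>i. mu i / (rho i + eps * G i i) - nu i / rho i"] by blast
  then have "Min (range (\<lambda>i. mu i / (rho i + eps * G i i) - nu i / rho i)) = mu i / (rho i + eps * G i i) - nu i / rho i"
    by (intro Min_eqI) auto
  then show thesis
    using that[of i] by (simp add: top_drift_def drift_eq)
qed

lemma top_drift_neg:
  assumes eps_bound: "eps < Min (range (\<lambda>i. rho i / G i i * (mu i / nu i - 1)))"
  shows "top_drift < 0"
proof -
  have "0 < mu i / (rho i + eps * G i i) - nu i / rho i" for i
  proof -
    have "eps < rho i / G i i * (mu i / nu i - 1)"
      using eps_bound Min_le[of "range (\<lambda>i. rho i / G i i * (mu i / nu i - 1))"] by fastforce
    then have "nu i * (rho i + eps * G i i) < mu i * rho i"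
      using Gmat_diag_ge_one[of i] nu_pos[of i] by (simp add: field_simps)
    moreover have "mu i / (rho i + eps * G i i) - nu i / rho i
        = (mu i * rho i - nu i * (rho i + eps * G i i)) / ((rho i + eps * G i i) * rho i)"
      using rho_plus_eps_Gmat_pos[of i] rho_pos[of i] by (simp add: field_simps)
    ultimately show ?thesis
      using rho_plus_eps_Gmat_pos[of i] rho_pos[of i] by simp
  qed
  then have "0 < Min (range (\<lambda>i. mu i / (rho i + eps * G i i) - nu i / rho i))"
    by simp
  then show ?thesis
    unfolding top_drift_def using eps_pos by (simp add: mult_pos_pos)
qed

lemma top_drift_le_ratio_on_axis:
  assumes neg: "top_drift < 0" and top: "drift i = top_drift"
  shows "top_drift \<le> jgen lam mu P (hfun P eps rho) (\<lambda>j. if j = i then Suc n else 0)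
                      / hfun P eps rho (\<lambda>j. if j = i then Suc n else 0)"
proof (rule generator_ratio_ge)
  fix k
  have "0 < eps * nu k / rho k"
    using eps_pos nu_pos[of k] rho_pos[of k] by simp
  then show "top_drift \<le> local_drift k (\<lambda>j. if j = i then Suc n else 0)"
    using neg top by (auto simp: local_drift_def drift_def)
qed

lemma Limsup_generator_ratio:
  assumes neg: "top_drift < 0"
  shows "Limsup cofinite (\<lambda>x. ereal (jgen lam mu P (hfun P eps rho) x / hfun P eps rho x))
           = ereal top_drift"
proof (rule Limsup_cofinite_eqI)
  show "jgen lam mu P (hfun P eps rho) x / hfun P eps rho x
      \<le> top_drift + (\<Sum>k\<in>UNIV. boundary_rate k * boundary_weight k x)" for x
    by (rule generator_ratio_le[OF drift_le_top_drift])
  show "((\<lambda>x. \<Sum>k\<in>UNIV. boundary_rate k * boundary_weight k x) \<longlongrightarrow> 0) cofinite"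
    by (intro tendsto_null_sum tendsto_mult_right_zero boundary_weight_tendsto_zero)
  obtain i where top: "drift i = top_drift"
    by (rule obtain_top_drift)
  define axis where "axis n = (\<lambda>j. if j = i then Suc n else 0)" for n
  have "inj axis"
    by (rule injI) (simp add: axis_def fun_eq_iff split: if_splits)
  moreover have "range axis \<subseteq> {x. top_drift \<le> jgen lam mu P (hfun P eps rho) x / hfun P eps rho x}"
    using top_drift_le_ratio_on_axis[OF neg top] by (auto simp: axis_def)
  ultimately show "infinite {x. top_drift \<le> jgen lam mu P (hfun P eps rho) x / hfun P eps rho x}"
    using range_inj_infinite infinite_super by blast
qed

end

theorem corollary3p1:
  fixes lam mu nu rho :: "'d::finite \<Rightarrow> real"
    and P :: "'d \<Rightarrow> 'd \<Rightarrow> real"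
    and eps :: real
  assumes lam_nonneg: "\<And>i. lam i \<ge> 0"
    and mu_pos: "\<And>i. mu i > 0"
    and P_nonneg: "\<And>i j. P i j \<ge> 0"
    and P_diag: "\<And>i. P i i = 0"
    and P_substoch: "\<And>i. (\<Sum>j\<in>UNIV. P i j) \<le> 1"
    and hypA_irred: "irreducible_rates (jrate lam mu P)"
    and hypA_traffic: "\<And>j. nu j = lam j + (\<Sum>i\<in>UNIV. nu i * P i j)"
    and hypA_nu_pos: "\<And>i. nu i > 0"
    and hypB: "\<And>i. nu i < mu i"
    and branching: "\<And>i. card {j. P j i > 0} \<le> 1"
    and rho: "\<And>i. (\<Sum>j\<in>UNIV. rho j * P j i) < rho i"
    and eps_pos: "0 < eps"
    and eps_bound: "eps < Min (range (\<lambda>i. rho i / Gmat P i i * (mu i / nu i - 1)))"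
  shows "Limsup cofinite (\<lambda>x. ereal (jgen lam mu P (hfun P eps rho) x / hfun P eps rho x))
           = ereal (- eps * Min (range (\<lambda>i. mu i / (rho i + eps * Gmat P i i) - nu i / rho i)))
         \<and> - eps * Min (range (\<lambda>i. mu i / (rho i + eps * Gmat P i i) - nu i / rho i)) < 0"
proof -
  have rho_pos: "0 < rho i" for i
    using P_nonneg column_sum_le_one[OF P_nonneg P_substoch branching] rho by (rule excessive_pos)
  interpret jackson_branching P rho lam mu nu eps
    by unfold_locales (fact P_nonneg rho_pos rho mu_pos hypA_traffic hypA_nu_pos branching eps_pos)+
  show ?thesis
    using Limsup_generator_ratio top_drift_neg[OF eps_bound] unfolding top_drift_def by simp
qed

end
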